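(* Let $n\ge2$, $q\in\mathbb C$ a primitive $n$-th root of unity, and $u_q(sl_2)$ the $\mathbb C$-algebra with generators $K,E,F$ and relations $K^n=1$, $E^n=F^n=0$, $EK=qKE$, $FK=q^{-1}KF$, $EF-FE=\frac{K-K^{-1}}{q-q^{-1}}$, with basis $\{K^iF^jE^k:0\le i,j,k\le n-1\}$. Let $u\in u_q(sl_2)_0$ be invertible and write $u=u_K+\cdots$, where $u_K$ lies in the Cartan subalgebra spanned by $1,K,\dots,K^{n-1}$ and $\cdots$ denotes a linear combination of basis monomials $K^iF^jE^j$ with $j\ge1$. Then $u_K$ is invertible and $u^{-1}=u_K^{-1}+\cdots$, where again $\cdots$ denotes a linear combination of basis monomials $K^iF^jE^j$ with $j\ge1$.
   Context: $u_q(sl_2)_0$ denotes the degree-zero part of the $\mathbb Z/n\mathbb Z$-grading in which $K^iF^jE^k$ has degree $j-k$ mod $n$, i.e. the span of the monomials $K^iF^jE^j$, $0\le i,j\le n-1$. *)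

theory Defs
  imports Complex_Main
begin

text \<open>Model of u_q(sl_2): an arbitrary ring A (type 'a) with a central embedding
  sc of the complex scalars, elements K, E, F satisfying the defining relations,
  and such that the monomials K^i F^j E^k (0 \<le> i,j,k \<le> n-1) form a C-basis.
  Any such algebra is isomorphic to u_q(sl_2).\<close>

definition primitive_root :: "nat \<Rightarrow> complex \<Rightarrow> bool" where
  "primitive_root n q \<longleftrightarrow> q ^ n = 1 \<and> (\<forall>k. 0 < k \<and> k < n \<longrightarrow> q ^ k \<noteq> 1)"

definition scalar_embedding :: "(complex \<Rightarrow> 'a::ring_1) \<Rightarrow> bool" where
  "scalar_embedding sc \<longleftrightarrow>
     sc 1 = 1 \<and> (\<forall>x y. sc (x + y) = sc x + sc y) \<and> (\<forall>x y. sc (x * y) = sc x * sc y)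
     \<and> (\<forall>x y. sc x * y = y * sc x)"

definition uq_sl2 :: "nat \<Rightarrow> complex \<Rightarrow> (complex \<Rightarrow> 'a::ring_1) \<Rightarrow> 'a \<Rightarrow> 'a \<Rightarrow> 'a \<Rightarrow> bool" where
  "uq_sl2 n q sc K E F \<longleftrightarrow>
     scalar_embedding sc \<and>
     K ^ n = 1 \<and> E ^ n = 0 \<and> F ^ n = 0 \<and>
     E * K = sc q * K * E \<and> F * K = sc (inverse q) * K * F \<and>
     E * F - F * E = sc (inverse (q - inverse q)) * (K - K ^ (n - 1)) \<and>
     (\<forall>x. \<exists>a. x = (\<Sum>(i,j,k)\<in>{..<n}\<times>{..<n}\<times>{..<n}. sc (a (i,j,k)) * K ^ i * F ^ j * E ^ k)) \<and>
     (\<forall>a. (\<Sum>(i,j,k)\<in>{..<n}\<times>{..<n}\<times>{..<n}. sc (a (i,j,k)) * K ^ i * F ^ j * E ^ k) = 0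
          \<longrightarrow> (\<forall>t\<in>{..<n}\<times>{..<n}\<times>{..<n}. a t = 0))"

definition is_inverse :: "'a::ring_1 \<Rightarrow> 'a \<Rightarrow> bool" where
  "is_inverse u v \<longleftrightarrow> u * v = 1 \<and> v * u = 1"

end

theory Submission
  imports Defs
begin

(* Conjugation by K multiplies the basis monomial K^i F^j E^k by q^(k-j), and q is primitive, so
   the degree-zero part is exactly the centralizer of K; being a centralizer, it contains u^-1
   along with u. Write u = u_K + u_+ and u^-1 = v_K + v_+ with u_K, v_K in the Cartan part H and
   u_+, v_+ in the left ideal A E. Since E H = H E, the difference 1 - u_K v_K = u_+ v_K + u v_+
   lies in both H and A E, and these intersect in 0 by the PBW basis. Hence u_K v_K = 1, and
   v_K u_K = 1 symmetrically. *)

lemma is_inverse_unique: "is_inverse a b \<Longrightarrow> is_inverse a c \<Longrightarrow> b = c"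
  unfolding is_inverse_def by (metis mult.assoc mult_1 mult_1_right)

lemma is_inverse_commute:
  assumes "is_inverse a b" and "a * x = x * a"
  shows "b * x = x * b"
proof -
  have "b * x = b * x * (a * b)" using assms(1) by (simp add: is_inverse_def)
  also have "\<dots> = b * (a * x) * b" using assms(2) by (simp add: mult.assoc)
  also have "\<dots> = x * b" using assms(1) by (simp add: is_inverse_def mult.assoc[symmetric])
  finally show ?thesis .
qed

lemma mult_eq_one_modulo_left_ideal:
  fixes H :: "'a::ring_1 set"
  assumes H_one: "1 \<in> H" and H_mult: "\<And>x y. x \<in> H \<Longrightarrow> y \<in> H \<Longrightarrow> x * y \<in> H"
    and H_diff: "\<And>x y. x \<in> H \<Longrightarrow> y \<in> H \<Longrightarrow> x - y \<in> H"
    and e_mult_H: "\<And>x. x \<in> H \<Longrightarrow> \<exists>y. e * x = y * e"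
    and H_inter_ideal: "H \<inter> range (\<lambda>y. y * e) = {0}"
    and "h \<in> H" "h' \<in> H" and "(h + l * e) * (h' + l' * e) = 1"
  shows "h * h' = 1"
proof -
  obtain y where y: "e * h' = y * e" using e_mult_H \<open>h' \<in> H\<close> by blast
  have "1 - h * h' = l * (e * h') + (h + l * e) * l' * e"
    using \<open>(h + l * e) * (h' + l' * e) = 1\<close> by (simp add: algebra_simps)
  also have "\<dots> = (l * y + (h + l * e) * l') * e"
    by (simp add: y distrib_right mult.assoc)
  finally have "1 - h * h' \<in> range (\<lambda>y. y * e)" by blast
  moreover have "1 - h * h' \<in> H" using \<open>h \<in> H\<close> \<open>h' \<in> H\<close> by (intro H_diff H_one H_mult)
  ultimately have "1 - h * h' = 0" using H_inter_ideal by blast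
  then show ?thesis by simp
qed

lemma primitive_root_nonzero: "primitive_root n q \<Longrightarrow> 0 < n \<Longrightarrow> q \<noteq> 0"
  by (cases n) (auto simp: primitive_root_def)

lemma primitive_root_power_inj:
  assumes "primitive_root n q" and "j < n" and "k < n" and "q ^ j = q ^ k"
  shows "j = k"
proof (rule ccontr)
  assume "j \<noteq> k"
  have "q \<noteq> 0" using assms(1,2) primitive_root_nonzero by simp
  then have "q ^ (l - m) = 1" if "m < l" "q ^ l = q ^ m" for l m
    using that by (simp add: power_diff)
  then have "q ^ (max j k - min j k) = 1"
    using \<open>j \<noteq> k\<close> assms(4) by (cases "j < k") (simp_all add: max_def min_def)
  moreover have "0 < max j k - min j k" "max j k - min j k < n"
    using \<open>j \<noteq> k\<close> assms(2,3) by auto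
  ultimately show False using assms(1) unfolding primitive_root_def by blast
qed

locale complex_algebra =
  fixes sc :: "complex \<Rightarrow> 'a::ring_1"
  assumes scalar_embedding: "scalar_embedding sc"
begin

lemma sc_1 [simp]: "sc 1 = 1" and sc_add: "sc (x + y) = sc x + sc y"
  and sc_mult: "sc (x * y) = sc x * sc y" and sc_commute: "sc x * z = z * sc x"
  using scalar_embedding unfolding scalar_embedding_def by blast+

lemma sc_0 [simp]: "sc 0 = 0"
  using sc_add[of 0 0] by simp

lemma sc_diff: "sc (x - y) = sc x - sc y"
  using sc_add[of "x - y" y] by (simp add: eq_diff_eq)

lemma sc_sum: "sc (sum f A) = (\<Sum>a\<in>A. sc (f a))"
  by (induction A rule: infinite_finite_induct) (simp_all add: sc_add)

lemma sc_mult_sc: "sc x * (sc y * z) = sc (x * y) * z"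
  by (simp add: sc_mult mult.assoc)

lemma mult_sc_left_commute: "z * (sc x * y) = sc x * (z * y)"
  by (metis mult.assoc sc_commute)

lemma power_mult_q_commute:
  assumes "x * y = sc c * y * x"
  shows "x ^ j * y = sc (c ^ j) * y * x ^ j"
proof (induction j)
  case (Suc j)
  have "x ^ Suc j * y = x * (x ^ j * y)" by (simp add: mult.assoc)
  also have "\<dots> = sc (c ^ j) * (x * y) * x ^ j"
    by (simp add: Suc mult.assoc mult_sc_left_commute[of x])
  also have "\<dots> = sc (c ^ Suc j) * y * x ^ Suc j"
    by (simp add: assms mult.assoc sc_mult_sc mult.commute)
  finally show ?case .
qed simp

lemma mult_power_q_commute:
  assumes "x * y = sc c * y * x"
  shows "x * y ^ m = sc (c ^ m) * y ^ m * x"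
proof (induction m)
  case (Suc m)
  have "x * y ^ Suc m = (x * y) * y ^ m" by (simp add: mult.assoc)
  also have "\<dots> = sc c * y * (sc (c ^ m) * y ^ m * x)"
    by (simp add: assms Suc mult.assoc)
  also have "\<dots> = sc c * sc (c ^ m) * y * y ^ m * x"
    by (simp add: mult.assoc mult_sc_left_commute[of y])
  also have "\<dots> = sc (c ^ Suc m) * y ^ Suc m * x"
    by (simp add: sc_mult mult.assoc)
  finally show ?case .
qed simp

end

locale uq_sl2_root_of_unity = complex_algebra sc
  for sc :: "complex \<Rightarrow> 'a::ring_1" +
  fixes n :: nat and q :: complex and K E F :: 'a
  assumes n_ge_2: "n \<ge> 2" and primitive: "primitive_root n q"
    and relations: "uq_sl2 n q sc K E F"
begin

lemma K_power_n: "K ^ n = 1" and E_power_n: "E ^ n = 0"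
  and E_K: "E * K = sc q * K * E" and F_K: "F * K = sc (inverse q) * K * F"
  using relations unfolding uq_sl2_def by blast+

definition pbw_index :: "(nat \<times> nat \<times> nat) set" where
  "pbw_index = {..<n} \<times> {..<n} \<times> {..<n}"

definition pbw_comb :: "(nat \<times> nat \<times> nat \<Rightarrow> complex) \<Rightarrow> 'a" where
  "pbw_comb d = (\<Sum>(i,j,k)\<in>pbw_index. sc (d (i,j,k)) * K ^ i * F ^ j * E ^ k)"

lemma pbw_comb_surj: "\<exists>d. x = pbw_comb d"
  using relations unfolding uq_sl2_def pbw_comb_def pbw_index_def by blast

lemma pbw_comb_eq_0D: "pbw_comb d = 0 \<Longrightarrow> t \<in> pbw_index \<Longrightarrow> d t = 0"
  using relations unfolding uq_sl2_def pbw_comb_def pbw_index_def by blast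

lemma pbw_comb_diff: "pbw_comb d - pbw_comb e = pbw_comb (\<lambda>t. d t - e t)"
  unfolding pbw_comb_def
  by (simp add: sum_subtractf[symmetric] case_prod_beta sc_diff left_diff_distrib)

lemma pbw_comb_eqD: "pbw_comb d = pbw_comb e \<Longrightarrow> t \<in> pbw_index \<Longrightarrow> d t = e t"
  using pbw_comb_eq_0D[of "\<lambda>t. d t - e t"] by (simp add: pbw_comb_diff[symmetric])

lemma pbw_comb_cong: "(\<And>t. t \<in> pbw_index \<Longrightarrow> d t = e t) \<Longrightarrow> pbw_comb d = pbw_comb e"
  unfolding pbw_comb_def by (intro sum.cong) auto

lemma q_nonzero: "q \<noteq> 0"
  using primitive n_ge_2 by (simp add: primitive_root_nonzero)

lemma E_power_K: "E ^ k * K = sc (q ^ k) * K * E ^ k"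
  by (rule power_mult_q_commute[OF E_K])

lemma F_power_K: "F ^ j * K = sc (inverse q ^ j) * K * F ^ j"
  by (rule power_mult_q_commute[OF F_K])

lemma E_K_power: "E * K ^ m = sc (q ^ m) * K ^ m * E"
  by (rule mult_power_q_commute[OF E_K])

lemma K_cancel_left:
  assumes "K * x = K * y" shows "x = y"
proof -
  have "K ^ (n - 1) * K = 1"
    using K_power_n n_ge_2 by (metis Suc_diff_1 less_le_trans pos2 power_Suc2)
  then show ?thesis by (metis assms mult.assoc mult_1)
qed

(* Only instances with a fixed non-scalar factor: the general commutation rule loops on sc x * sc y. *)
lemmas sc_to_front = sc_mult_sc
  mult_sc_left_commute[where z = "K ^ m" for m] sc_commute[where z = "K ^ m" for m, symmetric]
  mult_sc_left_commute[where z = "F ^ m" for m] sc_commute[where z = "F ^ m" for m, symmetric]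
  mult_sc_left_commute[where z = "E ^ m" for m] sc_commute[where z = "E ^ m" for m, symmetric]
  mult_sc_left_commute[where z = K] sc_commute[where z = K, symmetric]
  mult_sc_left_commute[where z = F] sc_commute[where z = F, symmetric]
  mult_sc_left_commute[where z = E] sc_commute[where z = E, symmetric]

lemma pbw_monomial_mult_K:
  "sc c * K ^ i * F ^ j * E ^ k * K = K * (sc (c * (q ^ k * inverse q ^ j)) * K ^ i * F ^ j * E ^ k)"
proof -
  have "sc c * K ^ i * F ^ j * E ^ k * K = sc (c * q ^ k) * K ^ i * (F ^ j * K) * E ^ k"
    by (simp add: E_power_K mult.assoc sc_to_front)
  also have "\<dots> = sc (c * q ^ k * inverse q ^ j) * (K ^ i * K) * F ^ j * E ^ k"
    by (simp add: F_power_K mult.assoc sc_to_front)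
  also have "\<dots> = K * (sc (c * (q ^ k * inverse q ^ j)) * K ^ i * F ^ j * E ^ k)"
    by (simp add: mult.assoc power_commutes sc_to_front mult_ac)
  finally show ?thesis .
qed

lemma pbw_comb_mult_K:
  "pbw_comb d * K = K * pbw_comb (\<lambda>(i,j,k). d (i,j,k) * (q ^ k * inverse q ^ j))"
  unfolding pbw_comb_def sum_distrib_left sum_distrib_right
  by (rule sum.cong) (auto simp: pbw_monomial_mult_K)

lemma pbw_comb_nested:
  "pbw_comb d = (\<Sum>i<n. \<Sum>j<n. \<Sum>k<n. sc (d (i,j,k)) * K ^ i * F ^ j * E ^ k)"
  by (simp add: pbw_comb_def pbw_index_def sum.cartesian_product case_prod_beta)

definition degree_zero_comb :: "(nat \<Rightarrow> nat \<Rightarrow> complex) \<Rightarrow> 'a" where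
  "degree_zero_comb b = (\<Sum>(i,j)\<in>{..<n}\<times>{..<n}. sc (b i j) * K ^ i * F ^ j * E ^ j)"

lemma degree_zero_comb_eq_pbw_comb:
  "degree_zero_comb b = pbw_comb (\<lambda>(i,j,k). if j = k then b i j else 0)"
proof -
  have "(\<Sum>k<n. sc (if j = k then b i j else 0) * K ^ i * F ^ j * E ^ k)
      = sc (b i j) * K ^ i * F ^ j * E ^ j" if "j < n" for i j
  proof -
    have "(\<Sum>k<n. sc (if j = k then b i j else 0) * K ^ i * F ^ j * E ^ k)
        = (\<Sum>k<n. if j = k then sc (b i j) * K ^ i * F ^ j * E ^ k else 0)"
      by (rule sum.cong) auto
    then show ?thesis using that by simp
  qed
  then have "degree_zero_comb b
      = (\<Sum>i<n. \<Sum>j<n. \<Sum>k<n. sc (if j = k then b i j else 0) * K ^ i * F ^ j * E ^ k)"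
    unfolding degree_zero_comb_def sum.cartesian_product[symmetric] by simp
  then show ?thesis by (simp only: pbw_comb_nested prod.case)
qed

lemma degree_zero_comb_commute_K: "degree_zero_comb b * K = K * degree_zero_comb b"
proof -
  have "q ^ j * inverse q ^ j = 1" for j
    using q_nonzero by (simp add: power_inverse[symmetric] field_simps)
  then show ?thesis
    unfolding degree_zero_comb_eq_pbw_comb pbw_comb_mult_K
    by (intro arg_cong[where f = "(*) K"] pbw_comb_cong) auto
qed

lemma commute_K_imp_degree_zero:
  assumes "x * K = K * x"
  shows "\<exists>b. x = degree_zero_comb b"
proof -
  obtain d where x: "x = pbw_comb d" using pbw_comb_surj by blast
  have "K * pbw_comb d = pbw_comb d * K" using assms x by simp
  also have "\<dots> = K * pbw_comb (\<lambda>(i,j,k). d (i,j,k) * (q ^ k * inverse q ^ j))"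
    by (rule pbw_comb_mult_K)
  finally have twist: "pbw_comb d = pbw_comb (\<lambda>(i,j,k). d (i,j,k) * (q ^ k * inverse q ^ j))"
    by (rule K_cancel_left)
  have "d (i,j,k) = 0" if "(i,j,k) \<in> pbw_index" "j \<noteq> k" for i j k
  proof -
    have "d (i,j,k) * (1 - q ^ k * inverse q ^ j) = 0"
      using pbw_comb_eqD[OF twist that(1)] by (simp add: algebra_simps)
    moreover have "q ^ k \<noteq> q ^ j"
      using primitive_root_power_inj[OF primitive, of j k] that by (auto simp: pbw_index_def)
    then have "q ^ k * inverse q ^ j \<noteq> 1"
      using q_nonzero by (simp add: power_inverse[symmetric] field_simps)
    ultimately show ?thesis by simp
  qed
  then have "x = degree_zero_comb (\<lambda>i j. d (i,j,j))"
    unfolding x degree_zero_comb_eq_pbw_comb by (intro pbw_comb_cong) auto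
  then show ?thesis by blast
qed

definition cartan_comb :: "(nat \<Rightarrow> complex) \<Rightarrow> 'a" where
  "cartan_comb c = (\<Sum>i<n. sc (c i) * K ^ i)"

definition cartan :: "'a set" where
  "cartan = range cartan_comb"

lemma cartan_comb_diff: "cartan_comb c - cartan_comb d = cartan_comb (\<lambda>i. c i - d i)"
  by (simp add: cartan_comb_def sc_diff left_diff_distrib sum_subtractf)

lemma cartan_comb_sum: "(\<Sum>a\<in>A. cartan_comb (c a)) = cartan_comb (\<lambda>i. \<Sum>a\<in>A. c a i)"
  unfolding cartan_comb_def sc_sum sum_distrib_right by (rule sum.swap)

lemma sc_mult_cartan_comb: "sc x * cartan_comb c = cartan_comb (\<lambda>i. x * c i)"
  by (simp add: cartan_comb_def sum_distrib_left sc_mult mult.assoc)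

lemma K_power_eq_cartan_comb: "K ^ m = cartan_comb (\<lambda>i. if i = m mod n then 1 else 0)"
proof -
  have "K ^ m = K ^ (n * (m div n) + m mod n)" by simp
  also have "\<dots> = (K ^ n) ^ (m div n) * K ^ (m mod n)" by (simp only: power_add power_mult)
  also have "\<dots> = (\<Sum>i<n. if i = m mod n then K ^ i else 0)"
    using n_ge_2 by (simp add: K_power_n)
  also have "\<dots> = cartan_comb (\<lambda>i. if i = m mod n then 1 else 0)"
    unfolding cartan_comb_def by (rule sum.cong) auto
  finally show ?thesis .
qed

lemma one_in_cartan: "1 \<in> cartan"
  using K_power_eq_cartan_comb[of 0] by (simp add: cartan_def)

lemma cartan_diff: "x \<in> cartan \<Longrightarrow> y \<in> cartan \<Longrightarrow> x - y \<in> cartan"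
  by (auto simp: cartan_def cartan_comb_diff)

lemma cartan_mult:
  assumes "x \<in> cartan" and "y \<in> cartan" shows "x * y \<in> cartan"
proof -
  obtain c d where "x = cartan_comb c" "y = cartan_comb d"
    using assms by (auto simp: cartan_def)
  then have "x * y = (\<Sum>l<n. \<Sum>i<n. sc (c i * d l) * K ^ (i + l))"
    by (simp add: cartan_comb_def sum_distrib_left sum_distrib_right mult.assoc power_add
        sc_to_front)
  also have "\<dots> = (\<Sum>l<n. \<Sum>i<n.
      cartan_comb (\<lambda>k. c i * d l * (if k = (i + l) mod n then 1 else 0)))"
    by (simp only: K_power_eq_cartan_comb sc_mult_cartan_comb)
  finally show ?thesis by (simp add: cartan_comb_sum cartan_def)
qed

lemma E_mult_cartan_comb: "E * cartan_comb c = cartan_comb (\<lambda>i. c i * q ^ i) * E"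
proof -
  have "E * (sc (c i) * K ^ i) = sc (c i * q ^ i) * K ^ i * E" for i
    by (simp only: mult_sc_left_commute[of E] E_K_power sc_mult mult.assoc)
  then show ?thesis
    unfolding cartan_comb_def sum_distrib_left sum_distrib_right by simp
qed

lemma E_mult_cartan: "x \<in> cartan \<Longrightarrow> \<exists>y. E * x = y * E"
  by (auto simp: cartan_def E_mult_cartan_comb)

lemma cartan_comb_mult_E_power:
  "cartan_comb c * E ^ (n - 1) = pbw_comb (\<lambda>(i,j,k). if j = 0 \<and> k = n - 1 then c i else 0)"
proof -
  have "(\<Sum>j<n. \<Sum>k<n. sc (if j = 0 \<and> k = n - 1 then c i else 0) * K ^ i * F ^ j * E ^ k)
      = sc (c i) * K ^ i * E ^ (n - 1)" for i
  proof -
    have "(\<Sum>j<n. \<Sum>k<n. sc (if j = 0 \<and> k = n - 1 then c i else 0) * K ^ i * F ^ j * E ^ k)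
        = (\<Sum>j<n. \<Sum>k<n.
             if k = n - 1 then (if j = 0 then sc (c i) * K ^ i * F ^ j * E ^ k else 0) else 0)"
      by (intro sum.cong refl) auto
    also have "\<dots> = sc (c i) * K ^ i * E ^ (n - 1)"
      using n_ge_2 by simp
    finally show ?thesis .
  qed
  then show ?thesis
    unfolding pbw_comb_nested cartan_comb_def sum_distrib_right prod.case by simp
qed

(* Right multiplication by E^(n-1) kills the left ideal A E but is injective on the Cartan part. *)
lemma cartan_inter_E_multiples: "cartan \<inter> range (\<lambda>y. y * E) = {0}"
proof -
  have "x = 0" if "x \<in> cartan" "x = y * E" for x y
  proof -
    obtain c where c: "x = cartan_comb c" using \<open>x \<in> cartan\<close> by (auto simp: cartan_def)
    have "E * E ^ (n - 1) = 0"
      using E_power_n n_ge_2 by (metis Suc_diff_1 less_le_trans pos2 power_Suc)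
    then have "cartan_comb c * E ^ (n - 1) = 0"
      using c that(2) by (metis mult.assoc mult_zero_right)
    then have "pbw_comb (\<lambda>(i,j,k). if j = 0 \<and> k = n - 1 then c i else 0) = 0"
      by (simp only: cartan_comb_mult_E_power)
    from pbw_comb_eq_0D[OF this, of "(i, 0, n - 1)" for i]
    have "c i = 0" if "i < n" for i
      using that n_ge_2 by (simp add: pbw_index_def)
    then show ?thesis by (simp add: c cartan_comb_def)
  qed
  moreover have "0 \<in> cartan" using one_in_cartan cartan_diff[of 1 1] by simp
  moreover have "0 \<in> range (\<lambda>y. y * E)" by (rule range_eqI[where x = 0]) simp
  ultimately show ?thesis by blast
qed

lemma degree_zero_comb_split:
  "degree_zero_comb b = cartan_comb (\<lambda>i. b i 0)
     + (\<Sum>(i,j)\<in>{..<n}\<times>{1..<n}. sc (b i j) * K ^ i * F ^ j * E ^ j)"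
proof -
  have split: "{..<n} \<times> {..<n} = {..<n} \<times> {0} \<union> {..<n} \<times> {1..<n}" by auto
  have "degree_zero_comb b = (\<Sum>(i,j)\<in>{..<n}\<times>{0}. sc (b i j) * K ^ i * F ^ j * E ^ j)
      + (\<Sum>(i,j)\<in>{..<n}\<times>{1..<n}. sc (b i j) * K ^ i * F ^ j * E ^ j)"
    unfolding degree_zero_comb_def split by (rule sum.union_disjoint) auto
  then show ?thesis by (simp add: cartan_comb_def sum.cartesian_product[symmetric])
qed

lemma positive_part_right_multiple_E:
  "\<exists>y. (\<Sum>(i,j)\<in>{..<n}\<times>{1..<n}. sc (b i j) * K ^ i * F ^ j * E ^ j) = y * E"
proof -
  have "(\<Sum>(i,j)\<in>{..<n}\<times>{1..<n}. sc (b i j) * K ^ i * F ^ j * E ^ j)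
      = (\<Sum>(i,j)\<in>{..<n}\<times>{1..<n}. sc (b i j) * K ^ i * F ^ j * E ^ (j - 1)) * E"
    unfolding sum_distrib_right
    by (intro sum.cong refl) (auto simp: mult.assoc power_Suc2[symmetric])
  then show ?thesis by blast
qed

lemma cartan_part_mult_eq_one:
  assumes "degree_zero_comb a * degree_zero_comb b = 1"
  shows "cartan_comb (\<lambda>i. a i 0) * cartan_comb (\<lambda>i. b i 0) = 1"
proof -
  obtain la lb where
    "(\<Sum>(i,j)\<in>{..<n}\<times>{1..<n}. sc (a i j) * K ^ i * F ^ j * E ^ j) = la * E"
    "(\<Sum>(i,j)\<in>{..<n}\<times>{1..<n}. sc (b i j) * K ^ i * F ^ j * E ^ j) = lb * E"
    using positive_part_right_multiple_E by meson
  then have "(cartan_comb (\<lambda>i. a i 0) + la * E) * (cartan_comb (\<lambda>i. b i 0) + lb * E) = 1"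
    using assms by (simp only: degree_zero_comb_split)
  from mult_eq_one_modulo_left_ideal[OF one_in_cartan cartan_mult cartan_diff E_mult_cartan
      cartan_inter_E_multiples _ _ this]
  show ?thesis by (simp add: cartan_def)
qed

end

theorem mainTheorem8:
  fixes n :: nat and q :: complex and sc :: "complex \<Rightarrow> 'a::ring_1"
    and K E F u :: 'a and a :: "nat \<Rightarrow> nat \<Rightarrow> complex"
  assumes "n \<ge> 2"
    and "primitive_root n q"
    and "uq_sl2 n q sc K E F"
    and u_def: "u = (\<Sum>(i,j)\<in>{..<n}\<times>{..<n}. sc (a i j) * K ^ i * F ^ j * E ^ j)"
    and "\<exists>v. is_inverse u v"
  shows "\<exists>w. is_inverse (\<Sum>i<n. sc (a i 0) * K ^ i) w \<and>
           (\<forall>v. is_inverse u v \<longrightarrow>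
              (\<exists>b :: nat \<Rightarrow> nat \<Rightarrow> complex.
                 v = w + (\<Sum>(i,j)\<in>{..<n}\<times>{1..<n}. sc (b i j) * K ^ i * F ^ j * E ^ j)))"
proof -
  interpret uq_sl2_root_of_unity sc n q K E F
    using assms(1-3) by unfold_locales (simp_all add: uq_sl2_def)
  have u: "u = degree_zero_comb a" by (simp add: u_def degree_zero_comb_def)
  obtain v0 where v0: "is_inverse u v0" using assms(5) by blast
  have "v0 * K = K * v0"
    using is_inverse_commute[OF v0] degree_zero_comb_commute_K by (simp add: u)
  then obtain b where b: "v0 = degree_zero_comb b" using commute_K_imp_degree_zero by blast
  have "is_inverse (cartan_comb (\<lambda>i. a i 0)) (cartan_comb (\<lambda>i. b i 0))"
    using v0 cartan_part_mult_eq_one unfolding is_inverse_def u b by blast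
  moreover have "v = cartan_comb (\<lambda>i. b i 0)
      + (\<Sum>(i,j)\<in>{..<n}\<times>{1..<n}. sc (b i j) * K ^ i * F ^ j * E ^ j)" if "is_inverse u v" for v
    using is_inverse_unique[OF that v0] b degree_zero_comb_split by simp
  ultimately show ?thesis unfolding cartan_comb_def by blast
qed

end
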